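(* There is an absolute constant $c$ such that for every graph $G$ with $|V(G)|=2^k$ ($|V(G)|\ge2$) and bijective encoding $\mathrm{enc}:V(G)\to\{0,1\}^k$, $\mathrm{opt}(R[G])\le c\,|V(G)|^2\log|V(G)|$.
   Context: $R[G]=(P,N)$ with $P=\{\mathrm{enc}(u)1\mathrm{enc}(u)^R:u\in V(G)\}$, $N=\{\mathrm{enc}(u)1\mathrm{enc}(v)^R:uv\in E(G)\}$ ($x^R$ = reversal). $\mathrm{opt}(\cdot)$ is the minimum number of states of a canonical DFA consistent with the samples: a DFA over $\{0,1\}$ with possibly partial transition function (undefined runs reject) whose states are partitioned into layers $L_0=\{q_0\},\dots,L_\ell$ with every transition going from some $L_t$ to $L_{t+1}$ and all accepting states in $L_\ell$. *)

theory Defs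
  imports Complex_Main
begin

text \<open>Finite simple graphs on vertex set V (vertices are naturals, which is no loss of
generality): E is a symmetric irreflexive relation on V, given as a set of ordered pairs;
an undirected edge uv is represented by both (u,v) and (v,u).\<close>

definition simple_graph :: "nat set \<Rightarrow> (nat \<times> nat) set \<Rightarrow> bool" where
  "simple_graph V E \<longleftrightarrow> finite V \<and> E \<subseteq> V \<times> V \<and> sym E \<and> irrefl E"

text \<open>Words over {0,1} are bool lists (True = 1). The sample R[G] = (P, N).\<close>

definition R_samples :: "nat set \<Rightarrow> (nat \<times> nat) set \<Rightarrow> (nat \<Rightarrow> bool list)
    \<Rightarrow> bool list set \<times> bool list set" where
  "R_samples V E enc =
     ({enc u @ [True] @ rev (enc u) | u. u \<in> V},
      {enc u @ [True] @ rev (enc v) | u v. (u, v) \<in> E})"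

fun run :: "(nat \<Rightarrow> bool \<Rightarrow> nat option) \<Rightarrow> nat \<Rightarrow> bool list \<Rightarrow> nat option" where
  "run \<delta> q [] = Some q"
| "run \<delta> q (a # w) = (case \<delta> q a of None \<Rightarrow> None | Some q' \<Rightarrow> run \<delta> q' w)"

definition accepts :: "(nat \<Rightarrow> bool \<Rightarrow> nat option) \<Rightarrow> nat \<Rightarrow> nat set \<Rightarrow> bool list \<Rightarrow> bool" where
  "accepts \<delta> q0 F w \<longleftrightarrow> (\<exists>q. run \<delta> q0 w = Some q \<and> q \<in> F)"

definition canonical_dfa :: "nat set \<Rightarrow> nat \<Rightarrow> (nat \<Rightarrow> bool \<Rightarrow> nat option) \<Rightarrow> nat set
    \<Rightarrow> (nat \<Rightarrow> nat) \<Rightarrow> nat \<Rightarrow> bool" where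
  "canonical_dfa Q q0 \<delta> F lay l \<longleftrightarrow>
     finite Q \<and> q0 \<in> Q \<and> F \<subseteq> Q \<and>
     (\<forall>q\<in>Q. lay q \<le> l) \<and>
     {q \<in> Q. lay q = 0} = {q0} \<and>
     (\<forall>q a q'. \<delta> q a = Some q' \<longrightarrow> q \<in> Q \<and> q' \<in> Q \<and> lay q' = Suc (lay q)) \<and>
     (\<forall>q\<in>F. lay q = l)"

definition consistent :: "(nat \<Rightarrow> bool \<Rightarrow> nat option) \<Rightarrow> nat \<Rightarrow> nat set
    \<Rightarrow> bool list set \<times> bool list set \<Rightarrow> bool" where
  "consistent \<delta> q0 F S \<longleftrightarrow>
     (\<forall>w\<in>fst S. accepts \<delta> q0 F w) \<and> (\<forall>w\<in>snd S. \<not> accepts \<delta> q0 F w)"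

definition opt :: "bool list set \<times> bool list set \<Rightarrow> nat" where
  "opt S = (LEAST n. \<exists>Q q0 \<delta> F lay l.
              canonical_dfa Q q0 \<delta> F lay l \<and> consistent \<delta> q0 F S \<and> card Q = n)"

end

theory Submission
  imports Defs "HOL-Library.Sublist" "HOL-Library.Countable"
begin

(* Only the positive sample P of R[G] has to be recognised exactly:
   the negative words are never positive, because a negative word
   enc(u) 1 enc(v)^R with uv an edge equals a positive word enc(w) 1 enc(w)^R only
   if u = w = v, which irreflexivity of E forbids.  A set of words of common length l
   is recognised exactly by its prefix tree (trie): the states are the prefixes of
   words in P, reading a letter extends the prefix, and the accepting states are the
   words of P.  Layering states by prefix length makes the trie a canonical DFA with
   at most (l + 1) |P| states.  For R[G] we have |P| <= |V| = 2^k and l = 2k + 1,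
   so opt(R[G]) <= |V| (2k + 2) <= 4 |V|^2 log |V|; hence c = 4 works. *)

definition prefix_closure :: "bool list set \<Rightarrow> bool list set" where
  "prefix_closure P = (\<Union>p\<in>P. set (prefixes p))"

lemma mem_prefix_closure: "w \<in> prefix_closure P \<longleftrightarrow> (\<exists>p\<in>P. prefix w p)"
  by (simp add: prefix_closure_def)

lemma subset_prefix_closure: "P \<subseteq> prefix_closure P"
  by (auto simp: mem_prefix_closure)

lemma prefix_closure_butlast: "w @ [a] \<in> prefix_closure P \<Longrightarrow> w \<in> prefix_closure P"
  unfolding mem_prefix_closure by (meson prefixI prefix_order.trans)

lemma Nil_in_prefix_closure: "P \<noteq> {} \<Longrightarrow> [] \<in> prefix_closure P"
  by (auto simp: mem_prefix_closure)

lemma finite_prefix_closure: "finite P \<Longrightarrow> finite (prefix_closure P)"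
  by (simp add: prefix_closure_def)

(* Every word has length + 1 prefixes, so the closure of |P| words of length l
   has at most (l + 1) |P| elements. *)
lemma card_prefix_closure:
  assumes "finite P" and "\<forall>p\<in>P. length p = l"
  shows "card (prefix_closure P) \<le> (l + 1) * card P"
proof -
  have "card (prefix_closure P) \<le> (\<Sum>p\<in>P. card (set (prefixes p)))"
    unfolding prefix_closure_def using assms(1) by (rule card_UN_le)
  also have "\<dots> \<le> (\<Sum>p\<in>P. l + 1)"
    using assms(2) by (intro sum_mono) (metis card_length length_prefixes)
  finally show ?thesis by (simp add: mult.commute)
qed

abbreviation state :: "bool list \<Rightarrow> nat" where
  "state \<equiv> to_nat"

abbreviation word_of_state :: "nat \<Rightarrow> bool list" where
  "word_of_state \<equiv> from_nat"

definition trie_delta :: "bool list set \<Rightarrow> nat \<Rightarrow> bool \<Rightarrow> nat option" where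
  "trie_delta P q a =
     (if q \<in> range state \<and> word_of_state q @ [a] \<in> prefix_closure P
      then Some (state (word_of_state q @ [a])) else None)"

lemma trie_delta_Some:
  "trie_delta P q a = Some q' \<longleftrightarrow>
     (\<exists>w. q = state w \<and> w @ [a] \<in> prefix_closure P \<and> q' = state (w @ [a]))"
  by (auto simp: trie_delta_def)

lemma run_append:
  "run \<delta> q (u @ v) = (case run \<delta> q u of None \<Rightarrow> None | Some q' \<Rightarrow> run \<delta> q' v)"
  by (induction u arbitrary: q) (auto split: option.splits)

lemma run_trie_delta:
  "v @ u \<in> prefix_closure P \<Longrightarrow> run (trie_delta P) (state v) u = Some (state (v @ u))"
proof (induction u arbitrary: v rule: rev_induct)
  case Nil
  then show ?case by simp
next
  case (snoc a u)
  have "v @ u \<in> prefix_closure P"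
    using snoc.prems prefix_closure_butlast[of "v @ u"] by simp
  then have "run (trie_delta P) (state v) u = Some (state (v @ u))"
    by (rule snoc.IH)
  moreover have "trie_delta P (state (v @ u)) a = Some (state (v @ u @ [a]))"
    using snoc.prems by (auto simp: trie_delta_Some)
  ultimately show ?case by (simp add: run_append)
qed

lemma run_trie_delta_result:
  "run (trie_delta P) (state v) u = Some q \<Longrightarrow> q = state (v @ u)"
proof (induction u arbitrary: v)
  case Nil
  then show ?case by simp
next
  case (Cons a u)
  then obtain q' where "trie_delta P (state v) a = Some q'" "run (trie_delta P) q' u = Some q"
    by (auto split: option.splits)
  then show ?case using Cons.IH[of "v @ [a]"] by (auto simp: trie_delta_Some)
qed

lemma trie_accepts: "accepts (trie_delta P) (state []) (state ` P) w \<longleftrightarrow> w \<in> P"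
proof
  assume "accepts (trie_delta P) (state []) (state ` P) w"
  then obtain q where "run (trie_delta P) (state []) w = Some q" "q \<in> state ` P"
    unfolding accepts_def by blast
  then show "w \<in> P" using run_trie_delta_result[of P "[]" w q] by (auto dest: injD)
next
  assume "w \<in> P"
  then show "accepts (trie_delta P) (state []) (state ` P) w"
    using run_trie_delta[of "[]" w P] subset_prefix_closure by (auto simp: accepts_def)
qed

lemma trie_canonical:
  assumes "finite P" and "P \<noteq> {}" and len: "\<forall>p\<in>P. length p = l"
  shows "canonical_dfa (state ` prefix_closure P) (state []) (trie_delta P) (state ` P)
           (\<lambda>q. length (word_of_state q)) l"
  unfolding canonical_dfa_def
proof (intro conjI)
  show "finite (state ` prefix_closure P)"
    using assms(1) by (simp add: finite_prefix_closure)
  show start: "state [] \<in> state ` prefix_closure P"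
    using assms(2) by (simp add: Nil_in_prefix_closure)
  show "state ` P \<subseteq> state ` prefix_closure P"
    using subset_prefix_closure by blast
  have "length w \<le> l" if "w \<in> prefix_closure P" for w
    using that len by (auto simp: mem_prefix_closure dest: prefix_length_le)
  then show "\<forall>q\<in>state ` prefix_closure P. length (word_of_state q) \<le> l"
    by auto
  show "{q \<in> state ` prefix_closure P. length (word_of_state q) = 0} = {state []}"
    using start by auto
  show "\<forall>q a q'. trie_delta P q a = Some q' \<longrightarrow> q \<in> state ` prefix_closure P \<and>
          q' \<in> state ` prefix_closure P \<and>
          length (word_of_state q') = Suc (length (word_of_state q))"
    by (auto simp: trie_delta_Some dest: prefix_closure_butlast)
  show "\<forall>q\<in>state ` P. length (word_of_state q) = l"
    using len by auto
qed

lemma opt_le_uniform_positives: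
  assumes "finite P" and "P \<noteq> {}" and "\<forall>p\<in>P. length p = l" and "P \<inter> N = {}"
  shows "opt (P, N) \<le> (l + 1) * card P"
proof -
  have "consistent (trie_delta P) (state []) (state ` P) (P, N)"
    using assms(4) by (auto simp: consistent_def trie_accepts)
  then have "opt (P, N) \<le> card (state ` prefix_closure P )"
    unfolding opt_def using trie_canonical[OF assms(1-3)] by (intro Least_le) blast
  also have "\<dots> = card (prefix_closure P)"
    by (simp add: card_image)
  also have "\<dots> \<le> (l + 1) * card P"
    using assms(1,3) by (rule card_prefix_closure)
  finally show ?thesis .
qed

lemma R_samples_positives:
  "fst (R_samples V E enc) = (\<lambda>u. enc u @ True # rev (enc u)) ` V"
  by (auto simp: R_samples_def)

(* A negative word of R[G] is never positive: equal halves force the edge to be a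
   loop, since enc is injective and all codes have the same length. *)
lemma R_samples_disjoint:
  assumes "simple_graph V E" and "bij_betw enc V {w. length w = k}"
  shows "fst (R_samples V E enc) \<inter> snd (R_samples V E enc) = {}"
proof (rule ccontr)
  assume "fst (R_samples V E enc) \<inter> snd (R_samples V E enc) \<noteq> {}"
  then obtain u v w where edge: "(u, v) \<in> E" and w: "w \<in> V"
    and eq: "enc w @ True # rev (enc w) = enc u @ True # rev (enc v)"
    by (auto simp: R_samples_def)
  have "u \<in> V" "v \<in> V" using edge assms(1) by (auto simp: simple_graph_def)
  then have "length (enc u) = length (enc w)" "length (enc v) = length (enc w)"
    using w assms(2) by (auto dest: bij_betwE)
  then have "enc u = enc w" "enc v = enc w" using eq by auto
  then have "u = v"
    using \<open>u \<in> V\<close> \<open>v \<in> V\<close> w assms(2) by (metis bij_betw_def inj_on_def)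
  then show False using edge assms(1) by (auto simp: simple_graph_def irrefl_def)
qed

lemma trie_size_le_log_bound:
  assumes "k \<ge> 1"
  shows "real (2 ^ k * (2 * k + 2)) \<le> 4 * real (2 ^ k) ^ 2 * log 2 (real (2 ^ k))"
proof -
  have n1: "(1::real) \<le> 2 ^ k" by simp
  have "real (2 ^ k * (2 * k + 2)) \<le> 2 ^ k * (4 * real k)"
    using assms by simp
  also have "\<dots> \<le> (2 ^ k) ^ 2 * (4 * real k)"
    using n1 by (intro mult_right_mono) (auto simp: power2_eq_square)
  finally show ?thesis by (simp add: log_nat_power mult_ac)
qed

theorem mainTheorem8:
  shows "\<exists>c::real. \<forall>(V::nat set) E (k::nat) (enc::nat \<Rightarrow> bool list).
     simple_graph V E \<and> card V = 2 ^ k \<and> card V \<ge> 2 \<and>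
     bij_betw enc V {w. length w = k} \<longrightarrow>
     real (opt (R_samples V E enc)) \<le> c * real (card V) ^ 2 * log 2 (real (card V))"
proof (intro exI[of _ 4] allI impI)
  fix V E k and enc :: "nat \<Rightarrow> bool list"
  assume G: "simple_graph V E \<and> card V = 2 ^ k \<and> card V \<ge> 2 \<and> bij_betw enc V {w. length w = k}"
  define P where "P = fst (R_samples V E enc)"
  define N where "N = snd (R_samples V E enc)"
  have V: "finite V" "V \<noteq> {}" using G by (auto simp: simple_graph_def)
  have k: "k \<ge> 1" using G by (cases k) auto
  have len: "\<forall>p\<in>P. length p = 2 * k + 1"
    using G by (auto simp: P_def R_samples_positives dest: bij_betwE)
  have "P \<inter> N = {}" using G R_samples_disjoint unfolding P_def N_def by blast
  then have "opt (P, N) \<le> (2 * k + 1 + 1) * card P"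
    using V by (intro opt_le_uniform_positives[OF _ _ len]) (auto simp: P_def R_samples_positives)
  then have "opt (R_samples V E enc) \<le> (2 * k + 2) * card P"
    by (simp add: P_def N_def)
  also have "\<dots> \<le> (2 * k + 2) * card V"
    using V by (intro mult_left_mono) (simp_all add: P_def R_samples_positives card_image_le)
  finally have "opt (R_samples V E enc) \<le> 2 ^ k * (2 * k + 2)"
    using G by (simp add: mult.commute)
  then have "real (opt (R_samples V E enc)) \<le> real (2 ^ k * (2 * k + 2))"
    by (simp only: of_nat_le_iff)
  with trie_size_le_log_bound[OF k] G
  show "real (opt (R_samples V E enc)) \<le> 4 * real (card V) ^ 2 * log 2 (real (card V))"
    by simp
qed

end
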